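(* Let $G$ be a finite nilpotent group. Then $G$ contains no word image impostor if and only if $G$ is an abelian group of prime exponent.
   Context: $F_d$ is the free group on $d$ letters; for $w\in F_d$, $w(G)$ is the image of the word map $G^d\to G$ given by evaluating $w$. A subset $A\subseteq G$ is a word image candidate if $1\in A$ and $\varphi(A)\subseteq A$ for every automorphism $\varphi$ of $G$. A word image impostor is a word image candidate $A$ such that $A\neq w(G)$ for every $d\ge1$ and every $w\in F_d$. *)

theory Defs
  imports "HOL-Algebra.Algebra"
begin

text \<open>Lower central series: gamma_1 = G (index 0 here), gamma_(i+1) = [gamma_i, G].\<close>
fun lower_central :: "('a, 'b) monoid_scheme \<Rightarrow> nat \<Rightarrow> 'a set" where
  "lower_central G 0 = carrier G"
| "lower_central G (Suc n) =
     generate G {h \<otimes>\<^bsub>G\<^esub> k \<otimes>\<^bsub>G\<^esub> inv\<^bsub>G\<^esub> h \<otimes>\<^bsub>G\<^esub> inv\<^bsub>G\<^esub> k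
                 | h k. h \<in> lower_central G n \<and> k \<in> carrier G}"

definition nilpotent_group :: "('a, 'b) monoid_scheme \<Rightarrow> bool" where
  "nilpotent_group G \<longleftrightarrow> group G \<and> (\<exists>n. lower_central G n = {\<one>\<^bsub>G\<^esub>})"

definition group_exponent :: "('a, 'b) monoid_scheme \<Rightarrow> nat" where
  "group_exponent G = (LEAST n. 0 < n \<and> (\<forall>x \<in> carrier G. x [^]\<^bsub>G\<^esub> n = \<one>\<^bsub>G\<^esub>))"

text \<open>Elements of the free group F_d are represented by (not necessarily reduced)
  words: lists of letters (i, b) with i < d, meaning x_i if b and x_i^(-1) otherwise.
  Every element of F_d has such a representative and evaluation is independent of
  the representative, so word images are exactly captured.\<close>
definition free_words :: "nat \<Rightarrow> (nat \<times> bool) list set" where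
  "free_words d = {w. \<forall>(i, b) \<in> set w. i < d}"

fun eval_word :: "('a, 'b) monoid_scheme \<Rightarrow> (nat \<Rightarrow> 'a) \<Rightarrow> (nat \<times> bool) list \<Rightarrow> 'a" where
  "eval_word G g [] = \<one>\<^bsub>G\<^esub>"
| "eval_word G g ((i, b) # w) =
     (if b then g i else inv\<^bsub>G\<^esub> (g i)) \<otimes>\<^bsub>G\<^esub> eval_word G g w"

definition word_image :: "('a, 'b) monoid_scheme \<Rightarrow> nat \<Rightarrow> (nat \<times> bool) list \<Rightarrow> 'a set" where
  "word_image G d w = {eval_word G g w | g. g \<in> {..<d} \<rightarrow> carrier G}"

definition word_image_candidate :: "('a, 'b) monoid_scheme \<Rightarrow> 'a set \<Rightarrow> bool" where
  "word_image_candidate G A \<longleftrightarrow> A \<subseteq> carrier G \<and> \<one>\<^bsub>G\<^esub> \<in> A \<and>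
     (\<forall>\<phi> \<in> iso G G. \<phi> ` A \<subseteq> A)"

definition word_image_impostor :: "('a, 'b) monoid_scheme \<Rightarrow> 'a set \<Rightarrow> bool" where
  "word_image_impostor G A \<longleftrightarrow> word_image_candidate G A \<and>
     (\<forall>d \<ge> 1. \<forall>w \<in> free_words d. A \<noteq> word_image G d w)"

end

theory Submission
  imports Defs "HOL-Number_Theory.Cong"
begin

(* An automorphism-invariant set {1} \<union> Aut(G)x that some endomorphism f moves out of itself
   cannot be a word image, because word images are invariant under all endomorphisms.
   In a non-abelian nilpotent group, take h in the term of the lower central series just before
   the last nontrivial one and g not commuting with h: y \<mapsto> [y,h] is an endomorphism with
   central values, and [g,h] \<noteq> 1 is central while no automorphic image of the non-central g is.
   In an abelian group with an element x of composite order ab, the power map y \<mapsto> y^a plays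
   the same role.  Otherwise all nontrivial elements have one and the same prime order, so the
   exponent is prime.  Conversely, Aut(G) is transitive on the nontrivial elements of an
   elementary abelian p-group, so its only candidates are {1} and G, the images of the empty
   word and of x\<^sub>1. *)

section \<open>Word images and automorphism orbits\<close>

lemma eval_word_closed:
  fixes G (structure)
  assumes "group G" "w \<in> free_words d" "gs \<in> {..<d} \<rightarrow> carrier G"
  shows "eval_word G gs w \<in> carrier G"
proof -
  interpret group G by fact
  show ?thesis
    using assms(2,3) by (induction w) (auto simp: free_words_def Pi_iff)
qed

lemma hom_eval_word:
  fixes G (structure)
  assumes "group G" "f \<in> hom G G" "w \<in> free_words d" "gs \<in> {..<d} \<rightarrow> carrier G"
  shows "f (eval_word G gs w) = eval_word G (f \<circ> gs) w"
proof -
  interpret group_hom G G f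
    using assms(1,2) by (simp add: group_hom_def group_hom_axioms_def)
  show ?thesis
    using assms(3,4) eval_word_closed[OF assms(1) _ assms(4)]
    by (induction w) (auto simp: free_words_def Pi_iff)
qed

lemma word_image_closed_under_endomorphism:
  fixes G (structure)
  assumes "group G" "f \<in> hom G G" "w \<in> free_words d" "z \<in> word_image G d w"
  shows "f z \<in> word_image G d w"
proof -
  obtain gs where gs: "gs \<in> {..<d} \<rightarrow> carrier G" "z = eval_word G gs w"
    using assms(4) by (auto simp: word_image_def)
  have "f \<circ> gs \<in> {..<d} \<rightarrow> carrier G"
    using gs(1) assms(2) by (auto simp: hom_def)
  then show ?thesis
    using hom_eval_word[OF assms(1-3) gs(1)] gs(2) by (auto simp: word_image_def)
qed

definition aut_orbit :: "('a, 'b) monoid_scheme \<Rightarrow> 'a \<Rightarrow> 'a set" where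
  "aut_orbit G x = {\<phi> x | \<phi>. \<phi> \<in> iso G G}"

lemma word_image_candidate_aut_orbit:
  fixes G (structure)
  assumes G: "group G" and x: "x \<in> carrier G"
  shows "word_image_candidate G (insert \<one> (aut_orbit G x))"
proof -
  interpret group G by fact
  have "\<psi> ` insert \<one> (aut_orbit G x) \<subseteq> insert \<one> (aut_orbit G x)" if \<psi>: "\<psi> \<in> iso G G" for \<psi>
  proof -
    have "\<psi> \<one> = \<one>" using \<psi> by (simp add: hom_one iso_imp_homomorphism G)
    moreover have "\<psi> (\<phi> x) \<in> aut_orbit G x" if "\<phi> \<in> iso G G" for \<phi>
      using iso_set_trans[OF that \<psi>] by (auto simp: aut_orbit_def intro!: exI[of _ "\<psi> \<circ> \<phi>"])
    ultimately show ?thesis by (auto simp: aut_orbit_def)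
  qed
  moreover have "aut_orbit G x \<subseteq> carrier G"
    using x by (auto simp: aut_orbit_def iso_iff hom_def)
  ultimately show ?thesis by (simp add: word_image_candidate_def)
qed

lemma word_image_impostor_from_endomorphism:
  fixes G (structure)
  assumes G: "group G" and f: "f \<in> hom G G" and x: "x \<in> carrier G"
    and fx: "f x \<notin> insert \<one> (aut_orbit G x)"
  shows "\<exists>A. word_image_impostor G A"
proof -
  define A where "A = insert \<one> (aut_orbit G x)"
  have "x \<in> A" using iso_set_refl[of G] by (force simp: A_def aut_orbit_def)
  then have "A \<noteq> word_image G d w" if "w \<in> free_words d" for d w
    using word_image_closed_under_endomorphism[OF G f that] fx by (auto simp: A_def)
  then show ?thesis
    using word_image_candidate_aut_orbit[OF G x] by (auto simp: word_image_impostor_def A_def)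
qed

lemma word_image_Nil:
  fixes G (structure)
  assumes "group G"
  shows "word_image G 1 [] = {\<one>}"
  using group.is_monoid[OF assms]
  by (auto simp: word_image_def monoid.one_closed intro!: exI[of _ "\<lambda>_. \<one>"])

lemma word_image_single_letter:
  fixes G (structure)
  assumes "group G"
  shows "word_image G 1 [(0, True)] = carrier G"
proof -
  interpret group G by fact
  have "c \<in> word_image G 1 [(0, True)]" if "c \<in> carrier G" for c
    using that unfolding word_image_def by (intro CollectI exI[of _ "\<lambda>_. c"]) auto
  then show ?thesis by (auto simp: word_image_def)
qed

lemma no_impostor_if_trivial_candidates:
  fixes G (structure)
  assumes "group G" "\<And>A. word_image_candidate G A \<Longrightarrow> A = {\<one>} \<or> A = carrier G"
  shows "\<not> (\<exists>A. word_image_impostor G A)"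
proof -
  have "[] \<in> free_words 1" "[(0, True)] \<in> free_words 1"
    by (simp_all add: free_words_def)
  then show ?thesis
    using assms word_image_Nil[OF assms(1)] word_image_single_letter[OF assms(1)]
    by (fastforce simp: word_image_impostor_def)
qed

section \<open>Non-abelian nilpotent groups\<close>

declare lower_central.simps [simp del]

abbreviation commutator :: "('a, 'b) monoid_scheme \<Rightarrow> 'a \<Rightarrow> 'a \<Rightarrow> 'a" where
  "commutator G h k \<equiv> h \<otimes>\<^bsub>G\<^esub> k \<otimes>\<^bsub>G\<^esub> inv\<^bsub>G\<^esub> h \<otimes>\<^bsub>G\<^esub> inv\<^bsub>G\<^esub> k"

lemma (in group) commutator_eq_one_iff:
  assumes "h \<in> carrier G" "k \<in> carrier G"
  shows "commutator G h k = \<one> \<longleftrightarrow> h \<otimes> k = k \<otimes> h"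
proof -
  have "commutator G h k = (h \<otimes> k) \<otimes> inv (k \<otimes> h)"
    using assms by (simp add: inv_mult_group m_assoc)
  then show ?thesis
    using assms by (metis inv_closed m_closed r_inv inv_equality inv_inv)
qed

lemma (in group) inv_commutator:
  assumes "h \<in> carrier G" "k \<in> carrier G"
  shows "inv (commutator G h k) = commutator G k h"
  using assms by (simp add: inv_mult_group m_assoc)

lemma lower_central_subset:
  fixes G (structure)
  assumes "group G"
  shows "lower_central G n \<subseteq> carrier G"
proof (induction n)
  case 0 then show ?case by (simp add: lower_central.simps)
next
  case (Suc n)
  interpret group G by fact
  show ?case using Suc unfolding lower_central.simps by (intro generate_incl) blast
qed

lemma commutator_in_lower_central:
  fixes G (structure)
  assumes "h \<in> lower_central G n" "k \<in> carrier G"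
  shows "commutator G h k \<in> lower_central G (Suc n)"
  using assms unfolding lower_central.simps by (intro generate.incl) blast

lemma lower_central_Suc_eq_one_iff:
  fixes G (structure)
  assumes "group G"
  shows "lower_central G (Suc n) = {\<one>} \<longleftrightarrow>
           (\<forall>h \<in> lower_central G n. \<forall>k \<in> carrier G. commutator G h k = \<one>)"
proof
  assume "lower_central G (Suc n) = {\<one>}"
  then show "\<forall>h \<in> lower_central G n. \<forall>k \<in> carrier G. commutator G h k = \<one>"
    using commutator_in_lower_central[of _ G n] by auto
next
  interpret group G by fact
  assume "\<forall>h \<in> lower_central G n. \<forall>k \<in> carrier G. commutator G h k = \<one>"
  then have "lower_central G (Suc n) \<subseteq> generate G {\<one>}"
    unfolding lower_central.simps by (intro mono_generate) blast
  moreover have "\<one> \<in> lower_central G (Suc n)"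
    unfolding lower_central.simps by (rule generate.one)
  ultimately show "lower_central G (Suc n) = {\<one>}"
    unfolding generate_one by blast
qed

lemma nilpotent_noncomm_obtains_last_nontrivial:
  fixes G (structure)
  assumes nil: "nilpotent_group G" and noncomm: "\<not> comm_group G"
  obtains j where "lower_central G (Suc j) \<noteq> {\<one>}" "lower_central G (Suc (Suc j)) = {\<one>}"
proof -
  have G: "group G" using nil by (simp add: nilpotent_group_def)
  interpret group G by fact
  note gamma_Suc = lower_central_Suc_eq_one_iff[OF G]
  define n0 where "n0 = (LEAST n. lower_central G n = {\<one>})"
  have n0: "lower_central G n0 = {\<one>}"
    unfolding n0_def by (rule LeastI_ex) (use nil in \<open>simp add: nilpotent_group_def\<close>)
  have gamma1: "lower_central G (Suc 0) \<noteq> {\<one>}"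
  proof
    assume "lower_central G (Suc 0) = {\<one>}"
    then have "\<forall>h \<in> carrier G. \<forall>k \<in> carrier G. h \<otimes> k = k \<otimes> h"
      using gamma_Suc[of 0] commutator_eq_one_iff by (simp add: lower_central.simps)
    then show False using noncomm group_comm_groupI by blast
  qed
  have "lower_central G 0 \<noteq> {\<one>}"
  proof
    assume "lower_central G 0 = {\<one>}"
    then have "lower_central G (Suc 0) = {\<one>}" using gamma_Suc[of 0] by simp
    with gamma1 show False ..
  qed
  with gamma1 n0 have "n0 \<noteq> 0" "n0 \<noteq> Suc 0" by auto
  then obtain j where j: "n0 = Suc (Suc j)"
    by (metis not0_implies_Suc)
  have "lower_central G (Suc j) \<noteq> {\<one>}"
    using not_less_Least[of "Suc j" "\<lambda>n. lower_central G n = {\<one>}"] j by (simp add: n0_def)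
  with n0 j that show ?thesis by blast
qed

text \<open>For \<open>h\<close> in the term before the last nontrivial one, the commutators \<open>[y, h]\<close> lie in
  that last term, which is central.\<close>

lemma nilpotent_noncomm_obtains_central_commutators:
  fixes G (structure)
  assumes nil: "nilpotent_group G" and noncomm: "\<not> comm_group G"
  obtains h g where "h \<in> carrier G" "g \<in> carrier G" "g \<otimes> h \<noteq> h \<otimes> g"
    and "\<And>y z. y \<in> carrier G \<Longrightarrow> z \<in> carrier G \<Longrightarrow>
           commutator G y h \<otimes> z = z \<otimes> commutator G y h"
proof -
  have G: "group G" using nil by (simp add: nilpotent_group_def)
  interpret group G by fact
  note gamma_Suc = lower_central_Suc_eq_one_iff[OF G]
  obtain j where nontriv: "lower_central G (Suc j) \<noteq> {\<one>}"
    and triv: "lower_central G (Suc (Suc j)) = {\<one>}"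
    using nilpotent_noncomm_obtains_last_nontrivial[OF nil noncomm] by blast
  obtain h g where hg: "h \<in> lower_central G j" "g \<in> carrier G" "commutator G h g \<noteq> \<one>"
    using nontriv gamma_Suc by blast
  have h: "h \<in> carrier G" using hg(1) lower_central_subset[OF G] by blast
  have "commutator G y h \<otimes> z = z \<otimes> commutator G y h"
    if "y \<in> carrier G" "z \<in> carrier G" for y z
  proof -
    have "commutator G y h \<in> lower_central G (Suc j)"
      using hg(1) that(1) unfolding inv_commutator[OF h that(1), symmetric] lower_central.simps
      by (intro generate.inv) blast
    then have "commutator G (commutator G y h) z = \<one>"
      using gamma_Suc[of "Suc j"] triv that(2) by auto
    then show ?thesis
      using commutator_eq_one_iff[OF _ that(2)] that(1) h by simp
  qed
  moreover have "g \<otimes> h \<noteq> h \<otimes> g" using commutator_eq_one_iff[OF h hg(2)] hg(3) by auto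
  ultimately show ?thesis using that h hg(2) by blast
qed

lemma (in group) commutator_hom_if_central:
  assumes h: "h \<in> carrier G"
    and central: "\<And>y z. y \<in> carrier G \<Longrightarrow> z \<in> carrier G \<Longrightarrow>
           commutator G y h \<otimes> z = z \<otimes> commutator G y h"
  shows "(\<lambda>y. commutator G y h) \<in> hom G G"
proof (rule homI)
  fix y z assume yz: "y \<in> carrier G" "z \<in> carrier G"
  then show "commutator G y h \<in> carrier G" using h by simp
  have "commutator G (y \<otimes> z) h = y \<otimes> commutator G z h \<otimes> (h \<otimes> inv y \<otimes> inv h)"
    using yz h by (simp add: m_assoc inv_mult_group) (simp flip: m_assoc)
  also have "\<dots> = commutator G z h \<otimes> y \<otimes> (h \<otimes> inv y \<otimes> inv h)"
    using central[OF yz(2,1)] by simp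
  also have "\<dots> = commutator G z h \<otimes> commutator G y h"
    using yz h by (simp add: m_assoc)
  also have "\<dots> = commutator G y h \<otimes> commutator G z h"
    using central[OF yz(2)] yz h by simp
  finally show "commutator G (y \<otimes> z) h = commutator G y h \<otimes> commutator G z h" .
qed

lemma (in group) central_if_aut_image_central:
  assumes \<phi>: "\<phi> \<in> iso G G" and x: "x \<in> carrier G"
    and central: "\<And>z. z \<in> carrier G \<Longrightarrow> \<phi> x \<otimes> z = z \<otimes> \<phi> x"
    and z: "z \<in> carrier G"
  shows "x \<otimes> z = z \<otimes> x"
proof -
  have hom: "\<phi> \<in> hom G G" and inj: "inj_on \<phi> (carrier G)" using \<phi> by (auto simp: iso_iff)
  have "\<phi> (x \<otimes> z) = \<phi> (z \<otimes> x)"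
    using central[OF hom_in_carrier[OF hom z]] x z hom by (simp add: hom_mult)
  then show ?thesis using inj x z by (simp add: inj_on_def)
qed

lemma noncomm_nilpotent_has_impostor:
  fixes G (structure)
  assumes nil: "nilpotent_group G" and noncomm: "\<not> comm_group G"
  shows "\<exists>A. word_image_impostor G A"
proof -
  have G: "group G" using nil by (simp add: nilpotent_group_def)
  interpret group G by fact
  obtain h g where h: "h \<in> carrier G" and g: "g \<in> carrier G" and gh: "g \<otimes> h \<noteq> h \<otimes> g"
    and central: "\<And>y z. y \<in> carrier G \<Longrightarrow> z \<in> carrier G \<Longrightarrow>
           commutator G y h \<otimes> z = z \<otimes> commutator G y h"
    using nilpotent_noncomm_obtains_central_commutators[OF nil noncomm] by blast
  have "commutator G g h \<noteq> \<phi> g" if "\<phi> \<in> iso G G" for \<phi>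
  proof
    assume "commutator G g h = \<phi> g"
    then have "g \<otimes> h = h \<otimes> g"
      using central_if_aut_image_central[OF that g _ h] central[OF g] by simp
    with gh show False by simp
  qed
  moreover have "commutator G g h \<noteq> \<one>" using commutator_eq_one_iff[OF g h] gh by blast
  ultimately show ?thesis
    using word_image_impostor_from_endomorphism[OF G commutator_hom_if_central[OF h central] g]
    by (auto simp: aut_orbit_def)
qed

section \<open>Abelian groups of non-prime exponent\<close>

lemma (in comm_group) nat_pow_hom: "(\<lambda>y. y [^] (n::nat)) \<in> hom G G"
  by (rule homI) (simp_all add: nat_pow_distrib)

lemma (in group) group_exponent_pow_eq_one:
  assumes "finite (carrier G)" "x \<in> carrier G"
  shows "x [^] group_exponent G = \<one>"
proof -
  have "0 < order G \<and> (\<forall>y \<in> carrier G. y [^] order G = \<one>)"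
    using assms(1) pow_order_eq_1 by (auto simp: order_def card_gt_0_iff)
  then show ?thesis
    using LeastI_ex[of "\<lambda>n. 0 < n \<and> (\<forall>y \<in> carrier G. y [^] n = \<one>)"] assms(2)
    unfolding group_exponent_def by blast
qed

lemma (in group) group_exponent_eq_ord:
  assumes "x \<in> carrier G" "0 < ord x" "\<And>y. y \<in> carrier G \<Longrightarrow> y [^] ord x = \<one>"
  shows "group_exponent G = ord x"
  unfolding group_exponent_def
proof (rule Least_equality)
  show "0 < ord x \<and> (\<forall>y \<in> carrier G. y [^] ord x = \<one>)" using assms by blast
  show "ord x \<le> n" if "0 < n \<and> (\<forall>y \<in> carrier G. y [^] n = \<one>)" for n
    using that assms(1) by (auto simp: pow_eq_id intro: dvd_imp_le)
qed

text \<open>A power map \<open>y \<mapsto> y\<^sup>a\<close> with \<open>a\<close> a proper divisor of \<open>ord x\<close> sends \<open>x\<close> to an element of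
  smaller order, which no automorphism does.\<close>

lemma (in comm_group) impostor_if_composite_order:
  assumes fin: "finite (carrier G)" and x: "x \<in> carrier G"
    and nontriv: "ord x \<noteq> 1" and composite: "\<not> Factorial_Ring.prime (ord x)"
  shows "\<exists>A. word_image_impostor G A"
proof -
  have "ord x > 1" using ord_ge_1[OF fin x] nontriv by linarith
  then obtain a where "a dvd ord x" and a: "a \<noteq> 1" "a \<noteq> ord x"
    using composite by (auto simp: prime_nat_iff)
  then obtain b where ab: "ord x = a * b" by (auto elim: dvdE)
  then have "0 < a * b" using \<open>ord x > 1\<close> by linarith
  then have ab_pos: "0 < a" "0 < b" by simp_all
  have "a \<le> ord x" using dvd_imp_le[OF \<open>a dvd ord x\<close>] \<open>ord x > 1\<close> by simp
  then have a_lt: "a < ord x" using a(2) by linarith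
  have b_lt: "b < ord x"
    using n_less_m_mult_n[of b a] ab ab_pos a(1) by simp
  have "x [^] a \<noteq> \<one>" using a_lt ab_pos(1) by (simp add: pow_eq_id[OF x] nat_dvd_not_less)
  moreover have "x [^] a \<noteq> \<phi> x" if \<phi>: "\<phi> \<in> iso G G" for \<phi>
  proof
    assume eq: "x [^] a = \<phi> x"
    have hom: "\<phi> \<in> hom G G" and inj: "inj_on \<phi> (carrier G)" using \<phi> by (auto simp: iso_iff)
    have "\<phi> (x [^] b) = \<phi> x [^] b" using hom_nat_pow[OF hom x is_group is_group] .
    also have "\<dots> = \<one>" using x by (simp add: nat_pow_pow ab[symmetric] flip: eq)
    also have "\<dots> = \<phi> \<one>" using hom by (simp add: hom_one is_group)
    finally have "x [^] b = \<one>" using inj x by (simp add: inj_on_def)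
    then show False using b_lt ab_pos(2) by (simp add: pow_eq_id[OF x] nat_dvd_not_less)
  qed
  ultimately show ?thesis
    using word_image_impostor_from_endomorphism[OF is_group nat_pow_hom x]
    by (auto simp: aut_orbit_def)
qed

text \<open>If \<open>x\<close> and \<open>y\<close> had different prime orders \<open>p\<close> and \<open>q\<close>, then \<open>xy\<close> would have order
  neither \<open>1\<close>, \<open>p\<close> nor \<open>q\<close>, yet a prime dividing \<open>pq\<close>.\<close>

lemma (in comm_group) ord_eq_if_prime_orders:
  assumes prime_ord: "\<And>z. z \<in> carrier G \<Longrightarrow> z \<noteq> \<one> \<Longrightarrow> Factorial_Ring.prime (ord z)"
    and x: "x \<in> carrier G" "x \<noteq> \<one>" and y: "y \<in> carrier G" "y \<noteq> \<one>"
  shows "ord x = ord y"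
proof (rule ccontr)
  assume ne: "ord x \<noteq> ord y"
  have px: "Factorial_Ring.prime (ord x)" and py: "Factorial_Ring.prime (ord y)"
    using prime_ord x y by auto
  have y_ord_x: "y [^] ord x \<noteq> \<one>"
    using y(1) ne primes_dvd_imp_eq[OF py px] by (auto simp: pow_eq_id)
  have x_ord_y: "x [^] ord y \<noteq> \<one>"
    using x(1) ne primes_dvd_imp_eq[OF px py] by (auto simp: pow_eq_id)
  define z where "z = x \<otimes> y"
  have z: "z \<in> carrier G" using x y by (simp add: z_def)
  have z_ord_x: "z [^] ord x = y [^] ord x" and z_ord_y: "z [^] ord y = x [^] ord y"
    using x y by (simp_all add: z_def nat_pow_distrib)
  then have "z \<noteq> \<one>" using y_ord_x by auto
  then have pz: "Factorial_Ring.prime (ord z)" using prime_ord z by blast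
  moreover have "ord z dvd ord x * ord y"
    using abelian_ord_mul_divides x y by (simp add: z_def)
  ultimately have "ord z dvd ord x \<or> ord z dvd ord y"
    by (simp add: prime_dvd_mult_iff)
  then have "ord z = ord x \<or> ord z = ord y"
    using pz px py primes_dvd_imp_eq by blast
  then show False
    using z_ord_x z_ord_y y_ord_x x_ord_y pow_ord_eq_1[OF z] by auto
qed

lemma (in comm_group) prime_group_exponent_if_prime_orders:
  assumes fin: "finite (carrier G)" and nontriv: "carrier G \<noteq> {\<one>}"
    and prime_ord: "\<And>z. z \<in> carrier G \<Longrightarrow> z \<noteq> \<one> \<Longrightarrow> Factorial_Ring.prime (ord z)"
  shows "Factorial_Ring.prime (group_exponent G)"
proof -
  obtain x where x: "x \<in> carrier G" "x \<noteq> \<one>" using nontriv one_closed by blast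
  have "y [^] ord x = \<one>" if "y \<in> carrier G" for y
    using ord_eq_if_prime_orders[OF prime_ord x that] that by (cases "y = \<one>") auto
  moreover have "0 < ord x" using prime_ord[OF x] prime_gt_0_nat by blast
  ultimately have "group_exponent G = ord x" using group_exponent_eq_ord[OF x(1)] by blast
  then show ?thesis using prime_ord[OF x] by simp
qed

lemma (in comm_group) impostor_if_group_exponent_not_prime:
  assumes fin: "finite (carrier G)" and nontriv: "carrier G \<noteq> {\<one>}"
    and not_prime: "\<not> Factorial_Ring.prime (group_exponent G)"
  shows "\<exists>A. word_image_impostor G A"
proof (cases "\<exists>x \<in> carrier G. ord x \<noteq> 1 \<and> \<not> Factorial_Ring.prime (ord x)")
  case True
  then show ?thesis using impostor_if_composite_order[OF fin] by blast
next
  case False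
  then have "Factorial_Ring.prime (group_exponent G)"
    using prime_group_exponent_if_prime_orders[OF fin nontriv] ord_eq_1 by blast
  with not_prime show ?thesis by blast
qed

section \<open>Elementary abelian groups\<close>

lemma (in group) subgroup_nat_pow_closed:
  assumes "subgroup H G" "h \<in> H"
  shows "h [^] (n::nat) \<in> H"
  using subgroup_int_pow_closed[OF assms, of "int n"] by (simp add: int_pow_int)

definition maximal_avoiding :: "('a, 'b) monoid_scheme \<Rightarrow> 'a set \<Rightarrow> 'a \<Rightarrow> bool" where
  "maximal_avoiding G M x \<longleftrightarrow> subgroup M G \<and> x \<notin> M \<and>
     (\<forall>H. subgroup H G \<and> M \<subseteq> H \<and> x \<notin> H \<longrightarrow> H = M)"

lemma exists_maximal_avoiding:
  assumes fin: "finite (carrier G)" and M0: "subgroup M0 G" "x \<notin> M0"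
  obtains M where "maximal_avoiding G M x" "M0 \<subseteq> M"
proof -
  define S where "S = {H. subgroup H G \<and> M0 \<subseteq> H \<and> x \<notin> H}"
  have "S \<subseteq> Pow (carrier G)" using subgroup.subset by (auto simp: S_def)
  then have "finite S" using fin by (simp add: finite_subset)
  moreover have "M0 \<in> S" using M0 by (simp add: S_def)
  ultimately obtain M where "M \<in> S" "M0 \<subseteq> M" "\<forall>H \<in> S. M \<subseteq> H \<longrightarrow> M = H"
    using finite_has_maximal2 by blast
  then have "maximal_avoiding G M x"
    unfolding maximal_avoiding_def S_def by (blast intro: subset_trans)
  with \<open>M0 \<subseteq> M\<close> show ?thesis using that by blast
qed

definition adjoin :: "('a, 'b) monoid_scheme \<Rightarrow> 'a set \<Rightarrow> 'a \<Rightarrow> 'a set" where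
  "adjoin G M g = {m \<otimes>\<^bsub>G\<^esub> g [^]\<^bsub>G\<^esub> (k::nat) | m k. m \<in> M}"

text \<open>For \<open>M\<close> maximal avoiding \<open>x\<close>, the decomposition \<open>g = m x\<^sup>k\<close> exists and determines
  \<open>m y\<^sup>k\<close> (\<open>maximal_avoiding_decomposition\<close>, \<open>decomposition_transfer\<close>), so the choice is
  irrelevant.\<close>

definition transfer_map :: "('a, 'b) monoid_scheme \<Rightarrow> 'a set \<Rightarrow> 'a \<Rightarrow> 'a \<Rightarrow> 'a \<Rightarrow> 'a" where
  "transfer_map G M x y g =
     (SOME z. \<exists>m \<in> M. \<exists>k::nat. g = m \<otimes>\<^bsub>G\<^esub> x [^]\<^bsub>G\<^esub> k \<and> z = m \<otimes>\<^bsub>G\<^esub> y [^]\<^bsub>G\<^esub> k)"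

lemma (in group) subset_adjoin:
  assumes "subgroup M G" shows "M \<subseteq> adjoin G M g"
proof
  fix m assume "m \<in> M"
  then have "m = m \<otimes> g [^] (0::nat)" using subgroup.subset[OF assms] by auto
  with \<open>m \<in> M\<close> show "m \<in> adjoin G M g" unfolding adjoin_def by blast
qed

lemma (in group) mem_adjoin:
  assumes "subgroup M G" "g \<in> carrier G" shows "g \<in> adjoin G M g"
proof -
  have "g = \<one> \<otimes> g [^] (1::nat)" using assms(2) by simp
  then show ?thesis using subgroup.one_closed[OF assms(1)] unfolding adjoin_def by blast
qed

locale elementary_abelian_group = comm_group G for G (structure) +
  fixes p :: nat
  assumes prime_p: "Factorial_Ring.prime p"
    and pow_p_eq_one: "\<And>x. x \<in> carrier G \<Longrightarrow> x [^] p = \<one>"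
begin

lemma pow_mod_p:
  assumes "x \<in> carrier G" shows "x [^] n = x [^] (n mod p)"
proof -
  have "x [^] n = x [^] (p * (n div p) + n mod p)" by simp
  also have "\<dots> = (x [^] p) [^] (n div p) \<otimes> x [^] (n mod p)"
    using assms by (simp add: nat_pow_mult nat_pow_pow)
  finally show ?thesis using assms pow_p_eq_one by simp
qed

lemma pow_eq_one_if_dvd:
  assumes "x \<in> carrier G" "p dvd n" shows "x [^] n = \<one>"
  using pow_mod_p[OF assms(1), of n] assms(2) by simp

text \<open>Exponents prime to \<open>p\<close> are invertible mod \<open>p\<close>, so \<open>x\<close> is itself a power of \<open>x\<^sup>j\<close>.\<close>

lemma mem_subgroup_if_pow_mem:
  assumes H: "subgroup H G" and x: "x \<in> carrier G"
    and xj: "x [^] j \<in> H" and not_dvd: "\<not> p dvd j"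
  shows "x \<in> H"
proof -
  have "coprime j p"
    using not_dvd prime_p prime_imp_coprime coprime_commute by metis
  then obtain j' where "[j * j' = 1] (mod p)"
    using cong_solve_coprime_nat by auto
  then have "(j * j') mod p = 1"
    using prime_gt_1_nat[OF prime_p] by (simp add: cong_def)
  then have "x = (x [^] j) [^] j'"
    using pow_mod_p[OF x, of "j * j'"] x by (simp add: nat_pow_pow)
  then show ?thesis using subgroup_nat_pow_closed[OF H xj, of j'] by simp
qed

lemma subgroup_adjoin:
  assumes M: "subgroup M G" and g: "g \<in> carrier G"
  shows "subgroup (adjoin G M g) G"
proof (rule subgroupI)
  have M_carrier: "M \<subseteq> carrier G" using M subgroup.subset by blast
  show "adjoin G M g \<subseteq> carrier G" using M_carrier g by (auto simp: adjoin_def)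
  show "adjoin G M g \<noteq> {}" using subset_adjoin[OF M] subgroup.one_closed[OF M] by blast
  show "inv a \<in> adjoin G M g" if a_adj: "a \<in> adjoin G M g" for a
  proof -
    obtain m k where m: "m \<in> M" and a: "a = m \<otimes> g [^] (k::nat)"
      using a_adj by (auto simp: adjoin_def)
    have "(p - 1) * k + k = p * k"
      using prime_gt_0_nat[OF prime_p] by (cases p) auto
    then have "g [^] ((p - 1) * k) \<otimes> g [^] k = \<one>"
      using g pow_eq_one_if_dvd[OF g, of "p * k"] by (simp add: nat_pow_mult)
    then have "inv (g [^] k) = g [^] ((p - 1) * k)"
      using g by (intro inv_equality) auto
    moreover have "m \<in> carrier G" using m M_carrier by blast
    ultimately have "inv a = inv m \<otimes> g [^] ((p - 1) * k)"
      using a g by (simp add: inv_mult)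
    then show ?thesis using subgroup.m_inv_closed[OF M m] unfolding adjoin_def by blast
  qed
  show "a \<otimes> b \<in> adjoin G M g" if ab_adj: "a \<in> adjoin G M g" "b \<in> adjoin G M g" for a b
  proof -
    obtain m k where m: "m \<in> M" and a: "a = m \<otimes> g [^] (k::nat)"
      using ab_adj(1) by (auto simp: adjoin_def)
    obtain m' k' where m': "m' \<in> M" and b: "b = m' \<otimes> g [^] (k'::nat)"
      using ab_adj(2) by (auto simp: adjoin_def)
    have "m \<in> carrier G" "m' \<in> carrier G" using m m' M_carrier by auto
    then have "a \<otimes> b = (m \<otimes> m') \<otimes> g [^] (k + k')"
      using a b g by (simp add: nat_pow_mult m_ac add.commute)
    then show ?thesis using subgroup.m_closed[OF M m m'] by (auto simp: adjoin_def)
  qed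
qed

text \<open>Maximality forces \<open>G = M \<times> \<langle>x\<rangle>\<close>: otherwise adjoining some \<open>g \<notin> M\<langle>x\<rangle>\<close> to \<open>M\<close>
  gives a larger subgroup that must contain \<open>x\<close>, and then \<open>g\<close> lies in \<open>M\<langle>x\<rangle>\<close> after all.\<close>

lemma maximal_avoiding_decomposition:
  assumes max: "maximal_avoiding G M x" and x: "x \<in> carrier G" and g: "g \<in> carrier G"
  shows "\<exists>m \<in> M. \<exists>k::nat. g = m \<otimes> x [^] k"
proof (rule ccontr)
  assume "\<not> ?thesis"
  then have g_notin: "g \<notin> adjoin G M x" by (auto simp: adjoin_def)
  have M: "subgroup M G" and xM: "x \<notin> M" using max by (auto simp: maximal_avoiding_def)
  have "g \<notin> M" using subset_adjoin[OF M] g_notin by blast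
  have "x \<in> adjoin G M g"
  proof (rule ccontr)
    assume "x \<notin> adjoin G M g"
    then have "adjoin G M g = M"
      using max subset_adjoin[OF M] subgroup_adjoin[OF M g] unfolding maximal_avoiding_def by blast
    with mem_adjoin[OF M g] \<open>g \<notin> M\<close> show False by blast
  qed
  then obtain m k where m: "m \<in> M" and xmk: "x = m \<otimes> g [^] (k::nat)"
    by (auto simp: adjoin_def)
  have m_carrier: "m \<in> carrier G" using m subgroup.subset[OF M] by blast
  show False
  proof (cases "p dvd k")
    case True
    then have "x = m" using xmk m_carrier pow_eq_one_if_dvd[OF g] by simp
    with xM m show False by simp
  next
    case False
    have "g [^] k = inv m \<otimes> x [^] (1::nat)" using xmk m_carrier g x by (simp add: m_assoc[symmetric])
    then have "g [^] k \<in> adjoin G M x"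
      using subgroup.m_inv_closed[OF M m] unfolding adjoin_def by blast
    then have "g \<in> adjoin G M x"
      using mem_subgroup_if_pow_mem[OF subgroup_adjoin[OF M x] g _ False] by blast
    with g_notin show False by blast
  qed
qed

lemma decomposition_transfer:
  assumes M: "subgroup M G" and u: "u \<in> carrier G" and indep: "\<And>j. u [^] j \<in> M \<Longrightarrow> p dvd j"
    and v: "v \<in> carrier G" and m: "m \<in> M" "m' \<in> M"
    and eq: "m \<otimes> u [^] (k::nat) = m' \<otimes> u [^] (k'::nat)"
  shows "m \<otimes> v [^] k = m' \<otimes> v [^] k'"
proof -
  have transfer: "m \<otimes> v [^] k = m' \<otimes> v [^] k'"
    if m: "m \<in> M" "m' \<in> M" and eq: "m \<otimes> u [^] k = m' \<otimes> u [^] k'" and le: "k' \<le> k"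
    for m m' and k k' :: nat
  proof -
    have mc: "m \<in> carrier G" "m' \<in> carrier G" using m subgroup.subset[OF M] by auto
    have k: "k = (k - k') + k'" using le by simp
    have "m \<otimes> u [^] (k - k') \<otimes> u [^] k' = m' \<otimes> u [^] k'"
      using eq mc u by (simp add: m_assoc nat_pow_mult flip: k)
    then have mm': "m \<otimes> u [^] (k - k') = m'" using mc u by simp
    then have "u [^] (k - k') = inv m \<otimes> m'" using mc u by (auto simp: m_assoc[symmetric])
    then have "u [^] (k - k') \<in> M"
      using subgroup.m_inv_closed[OF M m(1)] subgroup.m_closed[OF M _ m(2)] by simp
    then have d: "p dvd (k - k')" by (rule indep)
    then have "m = m'" using mm' mc pow_eq_one_if_dvd[OF u] by simp
    moreover have "v [^] k = v [^] (k - k') \<otimes> v [^] k'"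
      using v le by (simp add: nat_pow_mult)
    then have "v [^] k = v [^] k'"
      using pow_eq_one_if_dvd[OF v d] v by simp
    ultimately show ?thesis by simp
  qed
  show ?thesis
    using transfer[OF m eq] transfer[OF m(2,1) eq[symmetric]] by (cases "k' \<le> k") auto
qed

lemma maximal_avoiding_pow_mem_dvd:
  assumes "maximal_avoiding G M x" "x \<in> carrier G"
  shows "x [^] j \<in> M \<Longrightarrow> p dvd j"
  using assms mem_subgroup_if_pow_mem unfolding maximal_avoiding_def by blast

lemma transfer_map_eq:
  assumes max: "maximal_avoiding G M x" and x: "x \<in> carrier G" and y: "y \<in> carrier G"
    and m: "m \<in> M"
  shows "transfer_map G M x y (m \<otimes> x [^] (k::nat)) = m \<otimes> y [^] k"
proof -
  have M: "subgroup M G" using max by (simp add: maximal_avoiding_def)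
  have x_indep: "\<And>j. x [^] j \<in> M \<Longrightarrow> p dvd j"
    using maximal_avoiding_pow_mem_dvd[OF max x] by blast
  have "\<exists>m' \<in> M. \<exists>k'::nat.
          m \<otimes> x [^] k = m' \<otimes> x [^] k' \<and> transfer_map G M x y (m \<otimes> x [^] k) = m' \<otimes> y [^] k'"
    unfolding transfer_map_def by (rule someI_ex) (use m in blast)
  then obtain m' k' where m': "m' \<in> M" and "m \<otimes> x [^] k = m' \<otimes> x [^] (k'::nat)"
    and "transfer_map G M x y (m \<otimes> x [^] k) = m' \<otimes> y [^] k'"
    by blast
  then show ?thesis using decomposition_transfer[OF M x x_indep y m m'] by simp
qed

lemma transfer_map_hom:
  assumes max: "maximal_avoiding G M x" and x: "x \<in> carrier G" and y: "y \<in> carrier G"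
  shows "transfer_map G M x y \<in> hom G G"
proof -
  have M: "subgroup M G" using max by (simp add: maximal_avoiding_def)
  note decomp = maximal_avoiding_decomposition[OF max x]
  note \<phi> = transfer_map_eq[OF max x y]
  show ?thesis
  proof (rule homI)
    fix a assume "a \<in> carrier G"
    then show "transfer_map G M x y a \<in> carrier G"
      using decomp \<phi> subgroup.subset[OF M] y by fastforce
  next
    fix a b assume "a \<in> carrier G" "b \<in> carrier G"
    then obtain m k m' k' where m: "m \<in> M" "m' \<in> M"
      and a: "a = m \<otimes> x [^] (k::nat)" and b: "b = m' \<otimes> x [^] (k'::nat)"
      using decomp by meson
    have mc: "m \<in> carrier G" "m' \<in> carrier G" using m subgroup.subset[OF M] by auto
    have "a \<otimes> b = (m \<otimes> m') \<otimes> x [^] (k + k')"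
      using a b mc x by (simp add: nat_pow_mult m_ac add.commute)
    then have "transfer_map G M x y (a \<otimes> b) = (m \<otimes> m') \<otimes> y [^] (k + k')"
      using \<phi> subgroup.m_closed[OF M m] by simp
    also have "\<dots> = transfer_map G M x y a \<otimes> transfer_map G M x y b"
      using \<phi>[OF m(1)] \<phi>[OF m(2)] a b mc y by (simp add: nat_pow_mult m_ac add.commute)
    finally show "transfer_map G M x y (a \<otimes> b) = transfer_map G M x y a \<otimes> transfer_map G M x y b" .
  qed
qed

lemma transfer_map_inj:
  assumes max: "maximal_avoiding G M x" and x: "x \<in> carrier G"
    and y: "y \<in> carrier G" and y_indep: "\<And>j. y [^] j \<in> M \<Longrightarrow> p dvd j"
  shows "inj_on (transfer_map G M x y) (carrier G)"
proof (rule inj_onI)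
  have M: "subgroup M G" using max by (simp add: maximal_avoiding_def)
  note \<phi> = transfer_map_eq[OF max x y]
  fix a b assume "a \<in> carrier G" "b \<in> carrier G"
    and eq: "transfer_map G M x y a = transfer_map G M x y b"
  then obtain m k m' k' where m: "m \<in> M" "m' \<in> M"
    and a: "a = m \<otimes> x [^] (k::nat)" and b: "b = m' \<otimes> x [^] (k'::nat)"
    using maximal_avoiding_decomposition[OF max x] by meson
  have "m \<otimes> y [^] k = m' \<otimes> y [^] k'" using eq \<phi>[OF m(1)] \<phi>[OF m(2)] a b by simp
  then show "a = b" using decomposition_transfer[OF M y y_indep x m] a b by simp
qed

lemma aut_from_maximal_avoiding:
  assumes fin: "finite (carrier G)" and max: "maximal_avoiding G M x" and x: "x \<in> carrier G"
    and y: "y \<in> carrier G" and y_indep: "\<And>j. y [^] j \<in> M \<Longrightarrow> p dvd j"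
  shows "\<exists>\<phi> \<in> iso G G. \<phi> x = y"
proof -
  have M: "subgroup M G" using max by (simp add: maximal_avoiding_def)
  have hom: "transfer_map G M x y \<in> hom G G" and inj: "inj_on (transfer_map G M x y) (carrier G)"
    using transfer_map_hom[OF max x y] transfer_map_inj[OF max x y y_indep] .
  then have "transfer_map G M x y ` carrier G = carrier G"
    using endo_inj_surj[OF fin] by (auto simp: hom_def)
  with hom inj have iso: "transfer_map G M x y \<in> iso G G" by (simp add: iso_iff)
  have "transfer_map G M x y x = y"
    using transfer_map_eq[OF max x y subgroup.one_closed[OF M], of 1] x y by simp
  with iso show ?thesis by blast
qed

lemma aut_to_power:
  assumes fin: "finite (carrier G)" and x: "x \<in> carrier G" "x \<noteq> \<one>"
    and k: "\<not> p dvd k"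
  shows "\<exists>\<phi> \<in> iso G G. \<phi> x = x [^] k"
proof -
  obtain M where max: "maximal_avoiding G M x"
    using exists_maximal_avoiding[OF fin triv_subgroup, of x] x(2) by blast
  have "p dvd j" if "(x [^] k) [^] j \<in> M" for j
  proof -
    have "p dvd k * j"
      using that maximal_avoiding_pow_mem_dvd[OF max x(1)] x(1) by (simp add: nat_pow_pow)
    then show ?thesis using k by (simp add: prime_dvd_mult_iff[OF prime_p])
  qed
  then show ?thesis using aut_from_maximal_avoiding[OF fin max x(1)] x(1) by blast
qed

text \<open>For \<open>y \<notin> \<langle>x\<rangle>\<close> choose \<open>M\<close> maximal avoiding \<open>x\<close> and containing \<open>u = x\<inverse>y\<close>; then
  \<open>y\<^sup>j = x\<^sup>j u\<^sup>j\<close> shows \<open>\<langle>y\<rangle> \<inter> M = 1\<close> as well.\<close>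

lemma aut_outside_cyclic:
  assumes fin: "finite (carrier G)" and x: "x \<in> carrier G" "x \<noteq> \<one>" and y: "y \<in> carrier G"
    and y_notin: "y \<notin> adjoin G {\<one>} x"
  shows "\<exists>\<phi> \<in> iso G G. \<phi> x = y"
proof -
  define u where "u = inv x \<otimes> y"
  have u: "u \<in> carrier G" using x y by (simp add: u_def)
  have y_xu: "y = x \<otimes> u" using x y by (simp add: u_def m_assoc[symmetric])
  note cyclic_x = subgroup_adjoin[OF triv_subgroup x(1)] and x_in = mem_adjoin[OF triv_subgroup x(1)]
  have "x \<notin> adjoin G {\<one>} u"
  proof
    assume "x \<in> adjoin G {\<one>} u"
    then obtain i where i: "x = u [^] (i::nat)" using u by (auto simp: adjoin_def)
    show False
    proof (cases "p dvd i")
      case True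
      then have "y = u" using i y_xu u pow_eq_one_if_dvd[OF u] by simp
      then show False using y_xu x u by simp
    next
      case False
      then have "u \<in> adjoin G {\<one>} x" using mem_subgroup_if_pow_mem[OF cyclic_x u] i x_in by simp
      then show False using y_notin y_xu subgroup.m_closed[OF cyclic_x x_in] by simp
    qed
  qed
  then obtain M where max: "maximal_avoiding G M x" and uM': "adjoin G {\<one>} u \<subseteq> M"
    using exists_maximal_avoiding[OF fin subgroup_adjoin[OF triv_subgroup u]] by blast
  have M: "subgroup M G" using max by (simp add: maximal_avoiding_def)
  have uM: "u \<in> M" using uM' mem_adjoin[OF triv_subgroup u] by blast
  have "p dvd j" if "y [^] j \<in> M" for j
  proof -
    have "x [^] j = y [^] j \<otimes> inv (u [^] j)"
      using y_xu x u by (simp add: nat_pow_distrib m_assoc)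
    moreover have "inv (u [^] j) \<in> M"
      using subgroup.m_inv_closed[OF M subgroup_nat_pow_closed[OF M uM]] .
    ultimately have "x [^] j \<in> M" using that subgroup.m_closed[OF M] by simp
    then show ?thesis using maximal_avoiding_pow_mem_dvd[OF max x(1)] by blast
  qed
  then show ?thesis using aut_from_maximal_avoiding[OF fin max x(1) y] by blast
qed

lemma aut_transitive:
  assumes fin: "finite (carrier G)"
    and x: "x \<in> carrier G" "x \<noteq> \<one>" and y: "y \<in> carrier G" "y \<noteq> \<one>"
  shows "\<exists>\<phi> \<in> iso G G. \<phi> x = y"
proof (cases "y \<in> adjoin G {\<one>} x")
  case True
  then obtain k where k: "y = x [^] (k::nat)" using x by (auto simp: adjoin_def)
  then have "\<not> p dvd k" using pow_eq_one_if_dvd[OF x(1)] y(2) by blast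
  then show ?thesis using aut_to_power[OF fin x] k by blast
next
  case False
  then show ?thesis using aut_outside_cyclic[OF fin x y(1)] by blast
qed

lemma word_image_candidate_trivial_or_carrier:
  assumes fin: "finite (carrier G)" and A: "word_image_candidate G A"
  shows "A = {\<one>} \<or> A = carrier G"
proof -
  have A_sub: "A \<subseteq> carrier G" and one: "\<one> \<in> A" and aut_inv: "\<forall>\<phi> \<in> iso G G. \<phi> ` A \<subseteq> A"
    using A by (auto simp: word_image_candidate_def)
  have "y \<in> A" if x: "x \<in> A" "x \<noteq> \<one>" and y: "y \<in> carrier G" "y \<noteq> \<one>" for x y
  proof -
    obtain \<phi> where "\<phi> \<in> iso G G" "\<phi> x = y"
      using aut_transitive[OF fin _ x(2) y] x(1) A_sub by blast
    then show ?thesis using aut_inv x(1) by blast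
  qed
  then show ?thesis using A_sub one by blast
qed

end

lemma elementary_abelian_no_impostor:
  fixes G (structure)
  assumes "comm_group G" and fin: "finite (carrier G)"
    and prime_exp: "Factorial_Ring.prime (group_exponent G)"
  shows "\<not> (\<exists>A. word_image_impostor G A)"
proof -
  interpret comm_group G by fact
  interpret elementary_abelian_group G "group_exponent G"
    using prime_exp group_exponent_pow_eq_one[OF fin] by unfold_locales
  show ?thesis
    using no_impostor_if_trivial_candidates[OF is_group]
      word_image_candidate_trivial_or_carrier[OF fin] by blast
qed

theorem theorem3p2:
  fixes G :: "('a, 'b) monoid_scheme"
  assumes "nilpotent_group G" and "finite (carrier G)"
    and "carrier G \<noteq> {\<one>\<^bsub>G\<^esub>}"
  shows "(\<not> (\<exists>A. word_image_impostor G A)) \<longleftrightarrow>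
           comm_group G \<and> Factorial_Ring.prime (group_exponent G)"
proof
  assume no_impostor: "\<not> (\<exists>A. word_image_impostor G A)"
  then have comm: "comm_group G"
    using noncomm_nilpotent_has_impostor[OF assms(1)] by blast
  then have "Factorial_Ring.prime (group_exponent G)"
    using comm_group.impostor_if_group_exponent_not_prime[OF comm assms(2,3)] no_impostor by blast
  with comm show "comm_group G \<and> Factorial_Ring.prime (group_exponent G)" ..
next
  assume "comm_group G \<and> Factorial_Ring.prime (group_exponent G)"
  then show "\<not> (\<exists>A. word_image_impostor G A)"
    using elementary_abelian_no_impostor assms(2) by blast
qed

end
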